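(* Let $V\subset\mathbb{R}^d$ be a finite set of points, let $\varepsilon>0$, $c>1$ and let $k\ge 1$ be an integer. Let $S$ be a set of edges (unordered pairs of distinct points of $V$), partitioned as $S=S_0\cup S_1\cup\dots\cup S_{k-1}$, where $S_i$ is the set of edges of $S$ of index $i$. Suppose that Invariant 1 holds for every $S_i$, $0\le i\le k-1$. Then $S$, viewed as a graph on $V$ in which each edge $\{x,y\}$ has weight $\lVert xy\rVert$, is a $(1+\varepsilon)$-spanner of $V$: for all $u,v\in V$, the shortest-path distance $d_S(u,v)$ in $S$ satisfies $d_S(u,v)\le(1+\varepsilon)\lVert uv\rVert$.
   Context: $\lVert xy\rVert$ denotes the Euclidean distance between $x,y\in\mathbb{R}^d$. For distinct $u,v$, the index of the pair is $\operatorname{index}(u,v)=\lfloor \log_c\lVert uv\rVert\rfloor \bmod k$; the index of an edge is the index of its endpoint pair. Invariant 1 for $S_i$: for every pair $\{u,v\}$ of distinct points of $V$ with $\operatorname{index}(u,v)=i$ and $\{u,v\}\notin S_i$, there exist $l\ge 1$ and edges $\{x_1,y_1\},\dots,\{x_l,y_l\}\in S_i$ (each written with some ordering of its endpoints) such that $$\sum_{m=1}^l \lVert x_my_m\rVert+(1+\varepsilon)\Big(\lVert ux_1\rVert+\sum_{m=1}^{l-1}\lVert y_mx_{m+1}\rVert+\lVert y_lv\rVert\Big)<(1+\varepsilon)\lVert uv\rVert .$$ *)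

theory Defs
  imports "HOL-Analysis.Analysis"
begin

definition pair_index :: "real \<Rightarrow> nat \<Rightarrow> 'a::euclidean_space \<Rightarrow> 'a \<Rightarrow> nat" where
  "pair_index c k u v = nat (\<lfloor>log c (dist u v)\<rfloor> mod int k)"

definition edges_of_index :: "real \<Rightarrow> nat \<Rightarrow> 'a::euclidean_space set set \<Rightarrow> nat \<Rightarrow> 'a set set" where
  "edges_of_index c k S i = {e \<in> S. \<exists>x y. e = {x, y} \<and> x \<noteq> y \<and> pair_index c k x y = i}"

definition invariant1 :: "real \<Rightarrow> nat \<Rightarrow> real \<Rightarrow> 'a::euclidean_space set \<Rightarrow> 'a set set \<Rightarrow> nat \<Rightarrow> bool" where
  "invariant1 c k \<epsilon> V Si i \<longleftrightarrow>
    (\<forall>u\<in>V. \<forall>v\<in>V. u \<noteq> v \<and> pair_index c k u v = i \<and> {u, v} \<notin> Si \<longrightarrow>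
      (\<exists>es :: ('a \<times> 'a) list. es \<noteq> [] \<and> (\<forall>(x, y) \<in> set es. {x, y} \<in> Si) \<and>
        (\<Sum>m<length es. dist (fst (es ! m)) (snd (es ! m)))
        + (1 + \<epsilon>) * (dist u (fst (es ! 0))
            + (\<Sum>m<length es - 1. dist (snd (es ! m)) (fst (es ! (m + 1))))
            + dist (snd (last es)) v)
        < (1 + \<epsilon>) * dist u v))"

definition is_walk :: "'a set set \<Rightarrow> 'a list \<Rightarrow> bool" where
  "is_walk S ps \<longleftrightarrow> ps \<noteq> [] \<and> (\<forall>j < length ps - 1. {ps ! j, ps ! (j + 1)} \<in> S)"

definition walk_length :: "'a::euclidean_space list \<Rightarrow> real" where
  "walk_length ps = (\<Sum>j < length ps - 1. dist (ps ! j) (ps ! (j + 1)))"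

text \<open>Shortest-path distance d_S(u,v) (infinite if no path).\<close>
definition graph_dist :: "'a::euclidean_space set set \<Rightarrow> 'a \<Rightarrow> 'a \<Rightarrow> ereal" where
  "graph_dist S u v = (INF ps \<in> {ps. is_walk S ps \<and> hd ps = u \<and> last ps = v}. ereal (walk_length ps))"

end

theory Submission
  imports Defs
begin

text \<open>
  Induction on the distance \<open>\<parallel>uv\<parallel>\<close>, which is well founded because \<open>V\<close> is finite.
  If \<open>{u, v} \<in> S\<close> there is nothing to show. Otherwise Invariant 1 for the index of
  \<open>{u, v}\<close> yields edges \<open>{x\<^sub>1,y\<^sub>1}, \<dots>, {x\<^sub>l,y\<^sub>l}\<close> of \<open>S\<close> whose gaps \<open>u x\<^sub>1, y\<^sub>1 x\<^sub>2, \<dots>, y\<^sub>l v\<close>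
  sum to less than \<open>\<parallel>uv\<parallel>\<close>; so every gap is shorter than \<open>\<parallel>uv\<parallel>\<close> and, by induction,
  is bridged by a walk of length at most \<open>(1 + \<epsilon>)\<close> times the gap. Concatenating these
  walks with the edges gives a walk of length at most the left-hand side of the
  invariant, which is below \<open>(1 + \<epsilon>) \<parallel>uv\<parallel>\<close>.
\<close>

lemma walk_length_Cons_Cons [simp]:
  "walk_length (a # b # ps) = dist a b + walk_length (b # ps)"
  unfolding walk_length_def by (simp del: sum.lessThan_Suc add: sum.lessThan_Suc_shift)

lemma walk_length_singleton [simp]: "walk_length [a] = 0"
  by (simp add: walk_length_def)

lemma is_walk_Cons_Cons [simp]:
  "is_walk S (a # b # ps) \<longleftrightarrow> {a, b} \<in> S \<and> is_walk S (b # ps)"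
  unfolding is_walk_def by (auto simp: less_Suc_eq_0_disj)

lemma is_walk_singleton [simp]: "is_walk S [a]"
  by (simp add: is_walk_def)

lemma is_walk_append_tl:
  "is_walk S ps \<Longrightarrow> is_walk S qs \<Longrightarrow> last ps = hd qs \<Longrightarrow> is_walk S (ps @ tl qs)"
proof (induction ps rule: induct_list012)
  case 1
  then show ?case by (simp add: is_walk_def)
next
  case (2 x)
  then show ?case by (cases qs) (auto simp: is_walk_def)
next
  case (3 x y zs)
  then show ?case by auto
qed

lemma walk_length_append_tl:
  "ps \<noteq> [] \<Longrightarrow> qs \<noteq> [] \<Longrightarrow> last ps = hd qs \<Longrightarrow>
    walk_length (ps @ tl qs) = walk_length ps + walk_length qs"
proof (induction ps rule: induct_list012)
  case (2 x)
  then show ?case by (cases qs) auto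
qed auto

lemma last_append_tl: "qs \<noteq> [] \<Longrightarrow> last ps = hd qs \<Longrightarrow> last (ps @ tl qs) = last qs"
  by (cases qs) auto

definition has_walk_within :: "'a::euclidean_space set set \<Rightarrow> 'a \<Rightarrow> 'a \<Rightarrow> real \<Rightarrow> bool" where
  "has_walk_within S u v r \<longleftrightarrow>
    (\<exists>ps. is_walk S ps \<and> hd ps = u \<and> last ps = v \<and> walk_length ps \<le> r)"

lemma has_walk_within_refl: "has_walk_within S u u 0"
  unfolding has_walk_within_def by (intro exI[of _ "[u]"]) simp

lemma has_walk_within_edge: "{u, v} \<in> S \<Longrightarrow> has_walk_within S u v (dist u v)"
  unfolding has_walk_within_def by (intro exI[of _ "[u, v]"]) simp

lemma has_walk_within_mono:
  "has_walk_within S u v a \<Longrightarrow> a \<le> b \<Longrightarrow> has_walk_within S u v b"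
  unfolding has_walk_within_def by force

lemma has_walk_within_trans:
  assumes "has_walk_within S u v a" and "has_walk_within S v w b"
  shows "has_walk_within S u w (a + b)"
proof -
  obtain ps where ps: "is_walk S ps" "hd ps = u" "last ps = v" "walk_length ps \<le> a"
    using assms(1) unfolding has_walk_within_def by blast
  obtain qs where qs: "is_walk S qs" "hd qs = v" "last qs = w" "walk_length qs \<le> b"
    using assms(2) unfolding has_walk_within_def by blast
  have "ps \<noteq> []" "qs \<noteq> []"
    using ps(1) qs(1) by (auto simp: is_walk_def)
  then show ?thesis
    unfolding has_walk_within_def using ps qs
    by (intro exI[of _ "ps @ tl qs"])
      (auto simp: is_walk_append_tl walk_length_append_tl last_append_tl)
qed

lemma graph_dist_le_if_has_walk_within:
  "has_walk_within S u v r \<Longrightarrow> graph_dist S u v \<le> ereal r"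
  unfolding has_walk_within_def graph_dist_def by (auto intro: INF_lower2)

definition edges_length :: "('a::euclidean_space \<times> 'a) list \<Rightarrow> real" where
  "edges_length es = (\<Sum>m<length es. dist (fst (es ! m)) (snd (es ! m)))"

definition gaps_length :: "('a::euclidean_space \<times> 'a) list \<Rightarrow> real" where
  "gaps_length es = (\<Sum>m<length es - 1. dist (snd (es ! m)) (fst (es ! (m + 1))))"

lemma edges_length_Cons: "edges_length ((x, y) # es) = dist x y + edges_length es"
  unfolding edges_length_def by (simp del: sum.lessThan_Suc add: sum.lessThan_Suc_shift)

lemma edges_length_nonneg: "edges_length es \<ge> 0"
  unfolding edges_length_def by (intro sum_nonneg) simp

lemma gaps_length_singleton: "gaps_length [e] = 0"
  unfolding gaps_length_def by simp

lemma gaps_length_Cons: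
  "es \<noteq> [] \<Longrightarrow> gaps_length ((x, y) # es) = dist y (fst (hd es)) + gaps_length es"
  unfolding gaps_length_def
  by (cases es) (simp_all del: sum.lessThan_Suc add: sum.lessThan_Suc_shift)

lemma gaps_length_nonneg: "gaps_length es \<ge> 0"
  unfolding gaps_length_def by (intro sum_nonneg) simp

text \<open>Each single gap is at most the total gap length, hence shorter than \<open>D\<close> and bridgeable.\<close>

lemma has_walk_within_edge_chain:
  assumes edges_in_V: "\<And>x y. {x, y} \<in> S \<Longrightarrow> x \<in> V \<and> y \<in> V"
    and bridge: "\<And>a b. a \<in> V \<Longrightarrow> b \<in> V \<Longrightarrow> dist a b < D \<Longrightarrow> has_walk_within S a b (t * dist a b)"
  shows "es \<noteq> [] \<Longrightarrow> \<forall>(x, y) \<in> set es. {x, y} \<in> S \<Longrightarrow> u \<in> V \<Longrightarrow> v \<in> V \<Longrightarrow>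
    dist u (fst (hd es)) + gaps_length es + dist (snd (last es)) v < D \<Longrightarrow>
    has_walk_within S u v
      (edges_length es + t * (dist u (fst (hd es)) + gaps_length es + dist (snd (last es)) v))"
proof (induction es arbitrary: u)
  case Nil
  then show ?case by simp
next
  case (Cons e es)
  obtain x y where e: "e = (x, y)" by (cases e)
  have xy: "{x, y} \<in> S" using Cons.prems(2) e by auto
  with edges_in_V have xV: "x \<in> V" and yV: "y \<in> V" by auto
  let ?rest = "if es = [] then dist y v
    else dist y (fst (hd es)) + gaps_length es + dist (snd (last es)) v"
  have total: "dist u (fst (hd (e # es))) + gaps_length (e # es) + dist (snd (last (e # es))) v
      = dist u x + ?rest"
    using e by (simp add: gaps_length_singleton gaps_length_Cons)
  have rest_nonneg: "?rest \<ge> 0" by (simp add: gaps_length_nonneg)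
  have "dist u x < D" "?rest < D"
    using Cons.prems(5) total rest_nonneg zero_le_dist[of u x] by linarith+
  then have first: "has_walk_within S u y (t * dist u x + dist x y)"
    using bridge[OF Cons.prems(3) xV] has_walk_within_trans has_walk_within_edge[OF xy]
    by blast
  have "has_walk_within S y v (edges_length es + t * ?rest)"
  proof (cases "es = []")
    case True
    then show ?thesis
      using bridge[OF yV Cons.prems(4)] \<open>?rest < D\<close> by (simp add: edges_length_def)
  next
    case False
    then show ?thesis
      using Cons.IH[OF False _ yV Cons.prems(4)] Cons.prems(2) \<open>?rest < D\<close> by simp
  qed
  from has_walk_within_trans[OF first this] show ?case
    using e total by (simp add: edges_length_Cons algebra_simps)
qed

lemma finite_real_measure_induct [consumes 2, case_names less]:
  fixes f :: "'a \<Rightarrow> real"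
  assumes "finite A" and "x \<in> A"
    and step: "\<And>x. x \<in> A \<Longrightarrow> (\<And>y. y \<in> A \<Longrightarrow> f y < f x \<Longrightarrow> P y) \<Longrightarrow> P x"
  shows "P x"
  using \<open>x \<in> A\<close>
proof (induction "card {y \<in> A. f y < f x}" arbitrary: x rule: less_induct)
  case less
  show ?case
  proof (rule step[OF less.prems])
    fix y assume "y \<in> A" "f y < f x"
    then have "{z \<in> A. f z < f y} \<subset> {z \<in> A. f z < f x}" by auto
    then have "card {z \<in> A. f z < f y} < card {z \<in> A. f z < f x}"
      using \<open>finite A\<close> by (intro psubset_card_mono) auto
    then show "P y" using less.hyps \<open>y \<in> A\<close> by blast
  qed
qed

lemma pair_index_less: "k \<ge> 1 \<Longrightarrow> pair_index c k u v < k"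
  unfolding pair_index_def by (simp add: nat_less_iff)

lemma invariant1_detour:
  assumes "invariant1 c k \<epsilon> V Si (pair_index c k u v)" and "\<epsilon> > 0"
    and "u \<in> V" "v \<in> V" "u \<noteq> v" "{u, v} \<notin> Si"
  obtains es where "es \<noteq> []" "\<forall>(x, y) \<in> set es. {x, y} \<in> Si"
    and "edges_length es + (1 + \<epsilon>) * (dist u (fst (hd es)) + gaps_length es + dist (snd (last es)) v)
      < (1 + \<epsilon>) * dist u v"
    and "dist u (fst (hd es)) + gaps_length es + dist (snd (last es)) v < dist u v"
proof -
  obtain es where es: "es \<noteq> []" "\<forall>(x, y) \<in> set es. {x, y} \<in> Si"
    and raw: "(\<Sum>m<length es. dist (fst (es ! m)) (snd (es ! m)))
      + (1 + \<epsilon>) * (dist u (fst (es ! 0))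
        + (\<Sum>m<length es - 1. dist (snd (es ! m)) (fst (es ! (m + 1))))
        + dist (snd (last es)) v) < (1 + \<epsilon>) * dist u v"
    using assms(1,3-6) unfolding invariant1_def by blast
  have bound: "edges_length es + (1 + \<epsilon>) * (dist u (fst (hd es)) + gaps_length es
      + dist (snd (last es)) v) < (1 + \<epsilon>) * dist u v"
    using raw es(1) unfolding edges_length_def gaps_length_def by (simp add: hd_conv_nth)
  then have "(1 + \<epsilon>) * (dist u (fst (hd es)) + gaps_length es + dist (snd (last es)) v)
      < (1 + \<epsilon>) * dist u v"
    using edges_length_nonneg[of es] by linarith
  then have "dist u (fst (hd es)) + gaps_length es + dist (snd (last es)) v < dist u v"
    using \<open>\<epsilon> > 0\<close> by simp
  with es bound show ?thesis by (rule that)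
qed

lemma has_walk_within_stretch_if_closer_pairs:
  assumes edges_in_V: "\<And>x y. {x, y} \<in> S \<Longrightarrow> x \<in> V \<and> y \<in> V"
    and "\<epsilon> > 0" and "k \<ge> 1"
    and invariant: "\<forall>i<k. invariant1 c k \<epsilon> V (edges_of_index c k S i) i"
    and "u \<in> V" "v \<in> V"
    and closer: "\<And>a b. a \<in> V \<Longrightarrow> b \<in> V \<Longrightarrow> dist a b < dist u v \<Longrightarrow>
      has_walk_within S a b ((1 + \<epsilon>) * dist a b)"
  shows "has_walk_within S u v ((1 + \<epsilon>) * dist u v)"
proof -
  consider "u = v" | "{u, v} \<in> S" | "u \<noteq> v" "{u, v} \<notin> S" by blast
  then show ?thesis
  proof cases
    case 1
    then show ?thesis using has_walk_within_refl[of S u] by simp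
  next
    case 2
    have "dist u v \<le> (1 + \<epsilon>) * dist u v" using \<open>\<epsilon> > 0\<close> by (simp add: algebra_simps)
    with has_walk_within_edge[OF 2] show ?thesis by (rule has_walk_within_mono)
  next
    case 3
    let ?Si = "edges_of_index c k S (pair_index c k u v)"
    have inv: "invariant1 c k \<epsilon> V ?Si (pair_index c k u v)"
      using invariant pair_index_less[OF \<open>k \<ge> 1\<close>] by blast
    have "{u, v} \<notin> ?Si" using 3(2) by (simp add: edges_of_index_def)
    then obtain es where "es \<noteq> []" and edges: "\<forall>(x, y) \<in> set es. {x, y} \<in> ?Si"
      and bound: "edges_length es + (1 + \<epsilon>) * (dist u (fst (hd es)) + gaps_length es
        + dist (snd (last es)) v) < (1 + \<epsilon>) * dist u v"
      and gaps: "dist u (fst (hd es)) + gaps_length es + dist (snd (last es)) v < dist u v"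
      by (rule invariant1_detour[OF inv \<open>\<epsilon> > 0\<close> \<open>u \<in> V\<close> \<open>v \<in> V\<close> 3(1)])
    from edges have "\<forall>(x, y) \<in> set es. {x, y} \<in> S" by (auto simp: edges_of_index_def)
    from has_walk_within_edge_chain[OF edges_in_V closer \<open>es \<noteq> []\<close> this assms(5,6) gaps]
    show ?thesis using bound by (rule has_walk_within_mono[OF _ less_imp_le])
  qed
qed

theorem lemma1:
  fixes V :: "'a::euclidean_space set" and S :: "'a set set"
    and \<epsilon> c :: real and k :: nat
  assumes "finite V" and "\<epsilon> > 0" and "c > 1" and "k \<ge> 1"
    and "\<forall>e\<in>S. \<exists>x\<in>V. \<exists>y\<in>V. x \<noteq> y \<and> e = {x, y}"
    and "\<forall>i<k. invariant1 c k \<epsilon> V (edges_of_index c k S i) i"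
  shows "\<forall>u\<in>V. \<forall>v\<in>V. graph_dist S u v \<le> ereal ((1 + \<epsilon>) * dist u v)"
proof -
  have edges_in_V: "x \<in> V \<and> y \<in> V" if "{x, y} \<in> S" for x y
    using assms(5) that by (metis doubleton_eq_iff)
  have "has_walk_within S (fst p) (snd p) ((1 + \<epsilon>) * dist (fst p) (snd p))"
    if "p \<in> V \<times> V" for p
    using finite_cartesian_product[OF \<open>finite V\<close> \<open>finite V\<close>] that
  proof (induction p rule: finite_real_measure_induct[where f = "\<lambda>p. dist (fst p) (snd p)"])
    case (less p)
    have closer: "has_walk_within S a b ((1 + \<epsilon>) * dist a b)"
      if "a \<in> V" "b \<in> V" "dist a b < dist (fst p) (snd p)" for a b
      using less.IH[of "(a, b)"] that by simp
    from less.hyps have "fst p \<in> V" "snd p \<in> V" by auto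
    from has_walk_within_stretch_if_closer_pairs[OF edges_in_V assms(2,4,6) this closer]
    show ?case .
  qed
  then show ?thesis using graph_dist_le_if_has_walk_within by force
qed

end
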